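(* Let $X$ be a nonempty compact metric space, $Y$ a compact metric space and $\mathcal Y$ an $(X)$-regularizing family for $Y$. Then every point $p\in Y$ is the limit of some sequence $(Z_n)$ of pairwise distinct members of $\mathcal Y$, i.e. for some (equivalently, every) choice of points $p_n\in Z_n$ we have $p_n\to p$.
   Context: An $(X)$-regularizing family for $Y$ is a countably infinite family $\mathcal Y$ of subsets of $Y$ such that: (a1) the members are pairwise disjoint subspaces homeomorphic to $X$; (a2) $\mathcal Y$ is null (for every $\varepsilon>0$ only finitely many members have diameter $\ge\varepsilon$); (a3) each member has dense complement in $Y$; (a4) $\bigcup\mathcal Y$ is dense in $Y$; (a5) any two points not in a common member of $\mathcal Y$ are separated by an open, closed, $\mathcal Y$-saturated subset of $Y$ (each member is contained in it or disjoint from it). *)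

theory Defs
  imports "HOL-Analysis.Analysis"
begin

definition regularizing_family :: "'a::metric_space set \<Rightarrow> 'b::metric_space set \<Rightarrow> 'b set set \<Rightarrow> bool" where
  "regularizing_family X Y \<F> \<longleftrightarrow>
     countable \<F> \<and> infinite \<F> \<and> (\<forall>Z\<in>\<F>. Z \<subseteq> Y) \<and>
     \<comment> \<open>(a1)\<close>
     disjoint \<F> \<and> (\<forall>Z\<in>\<F>. Z homeomorphic X) \<and>
     \<comment> \<open>(a2)\<close>
     (\<forall>\<epsilon>>0. finite {Z\<in>\<F>. diameter Z \<ge> \<epsilon>}) \<and>
     \<comment> \<open>(a3)\<close>
     (\<forall>Z\<in>\<F>. Y \<subseteq> closure (Y - Z)) \<and>
     \<comment> \<open>(a4)\<close>
     Y \<subseteq> closure (\<Union>\<F>) \<and>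
     \<comment> \<open>(a5)\<close>
     (\<forall>p\<in>Y. \<forall>q\<in>Y. p \<noteq> q \<and> \<not> (\<exists>Z\<in>\<F>. p \<in> Z \<and> q \<in> Z) \<longrightarrow>
        (\<exists>U. openin (top_of_set Y) U \<and> closedin (top_of_set Y) U \<and>
             (\<forall>Z\<in>\<F>. Z \<subseteq> U \<or> Z \<inter> U = {}) \<and> p \<in> U \<and> q \<notin> U))"

end

theory Submission
  imports Defs
begin

text \<open>If only finitely many members met a ball around \<open>p\<close>, density of \<open>\<Union>\<F>\<close> would make
  their (closed) union contain \<open>Y\<close> near \<open>p\<close>; the member through \<open>p\<close> has a neighbourhood missing
  the others, so \<open>Y\<close> would locally lie in that member, against its complement being dense.
  Nullity then upgrades ``infinitely many members meet every ball'' to ``infinitely many members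
  lie in every ball'', and an injective choice of members in shrinking balls converges to \<open>p\<close>.\<close>

lemma strict_mono_choice:
  fixes I :: "nat \<Rightarrow> nat set"
  assumes "\<And>n. infinite (I n)"
  obtains k where "strict_mono k" "\<And>n. k n \<in> I n"
proof -
  have "\<exists>k. \<forall>n. k n \<in> I n \<and> k n < k (Suc n)"
  proof (rule dependent_nat_choice)
    show "\<exists>j. j \<in> I 0"
      using assms infinite_imp_nonempty by blast
    show "\<exists>j. j \<in> I (Suc n) \<and> i < j" for i n
      using assms infinite_nat_iff_unbounded by blast
  qed
  then show ?thesis
    using that strict_mono_Suc_iff by blast
qed

lemma injective_choice_countable:
  assumes "countable S" and "\<And>n. A n \<subseteq> S" and "\<And>n. infinite (A n)"
  obtains f :: "nat \<Rightarrow> 'a" where "inj f" "\<And>n. f n \<in> A n"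
proof -
  define e where "e = from_nat_into S"
  have "infinite S"
    using assms(2)[of 0] assms(3)[of 0] finite_subset by blast
  then have "bij_betw e UNIV S"
    unfolding e_def by (intro bij_betw_from_nat_into assms(1))
  then have "inj e" and range_e: "range e = S"
    by (simp_all add: bij_betw_def)
  have infinite_indices: "infinite (e -` A n)" for n
  proof
    assume "finite (e -` A n)"
    then have "finite (e ` (e -` A n))"
      by (rule finite_imageI)
    moreover have "e ` (e -` A n) = A n"
      using assms(2) range_e by (simp add: image_vimage_eq Int_absorb2)
    ultimately show False
      using assms(3) by simp
  qed
  then obtain k where "strict_mono k" "\<And>n. k n \<in> e -` A n"
    using strict_mono_choice[of "\<lambda>n. e -` A n"] infinite_indices by blast
  show ?thesis
  proof (rule that)
    show "inj (e \<circ> k)"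
      using \<open>inj e\<close> \<open>strict_mono k\<close> by (simp add: inj_compose strict_mono_imp_inj_on)
    show "(e \<circ> k) n \<in> A n" for n
      using \<open>\<And>n. k n \<in> e -` A n\<close> by simp
  qed
qed

lemma infinite_members_meeting_ball:
  fixes Y :: "'a::metric_space set"
  assumes "disjoint \<F>" and "\<And>Z. Z \<in> \<F> \<Longrightarrow> closed Z"
    and "\<And>Z. Z \<in> \<F> \<Longrightarrow> Y \<subseteq> closure (Y - Z)" and "Y \<subseteq> closure (\<Union>\<F>)"
    and "p \<in> Y" and "\<epsilon> > 0"
  shows "infinite {Z\<in>\<F>. Z \<inter> ball p \<epsilon> \<noteq> {}}"
proof
  define S where "S = {Z\<in>\<F>. Z \<inter> ball p \<epsilon> \<noteq> {}}"
  assume "finite S"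
  then have closed_union: "closed (\<Union>T)" if "T \<subseteq> S" for T
    using that assms(2) finite_subset unfolding S_def by blast
  have "Y \<inter> ball p \<epsilon> \<subseteq> closure (ball p \<epsilon> \<inter> \<Union>\<F>)"
    using assms(4) open_Int_closure_subset[of "ball p \<epsilon>" "\<Union>\<F>"] by auto
  also have "ball p \<epsilon> \<inter> \<Union>\<F> \<subseteq> \<Union>S"
    unfolding S_def by blast
  then have "closure (ball p \<epsilon> \<inter> \<Union>\<F>) \<subseteq> \<Union>S"
    using closed_union[of S] by (simp add: closure_minimal)
  finally have Y_near_p: "Y \<inter> ball p \<epsilon> \<subseteq> \<Union>S" .
  then obtain Z0 where Z0: "Z0 \<in> S" "p \<in> Z0"
    using assms(5,6) by auto
  define C where "C = \<Union>(S - {Z0})"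
  have "p \<notin> C"
    using assms(1) Z0 unfolding C_def S_def disjoint_def by blast
  moreover have "closed C"
    unfolding C_def by (rule closed_union) blast
  ultimately have "open (ball p \<epsilon> - C)" "p \<in> ball p \<epsilon> - C"
    using assms(6) by auto
  moreover have "p \<in> closure (Y - Z0)"
    using assms(3,5) Z0 unfolding S_def by blast
  ultimately have "(ball p \<epsilon> - C) \<inter> (Y - Z0) \<noteq> {}"
    using open_Int_closure_eq_empty by blast
  moreover have "\<Union>S \<subseteq> Z0 \<union> C"
    unfolding C_def by blast
  ultimately show False
    using Y_near_p by blast
qed

lemma infinite_members_inside_ball:
  assumes "\<And>Z. Z \<in> \<F> \<Longrightarrow> bounded Z"
    and "\<And>\<delta>. \<delta> > 0 \<Longrightarrow> finite {Z\<in>\<F>. diameter Z \<ge> \<delta>}"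
    and "\<And>\<delta>. \<delta> > 0 \<Longrightarrow> infinite {Z\<in>\<F>. Z \<inter> ball p \<delta> \<noteq> {}}"
    and "\<epsilon> > 0"
  shows "infinite {Z\<in>\<F>. Z \<subseteq> ball p \<epsilon>}"
proof -
  have inside: "Z \<subseteq> ball p \<epsilon>"
    if Z: "Z \<in> \<F>" "diameter Z < \<epsilon>/2" "Z \<inter> ball p (\<epsilon>/2) \<noteq> {}" for Z
  proof
    fix y assume "y \<in> Z"
    obtain x where "x \<in> Z" "dist p x < \<epsilon>/2"
      using Z(3) by auto
    moreover have "dist x y \<le> diameter Z"
      using assms(1) Z(1) \<open>x \<in> Z\<close> \<open>y \<in> Z\<close> diameter_bounded_bound by blast
    ultimately show "y \<in> ball p \<epsilon>"
      using Z(2) dist_triangle[of p y x] by simp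
  qed
  have "{Z\<in>\<F>. Z \<inter> ball p (\<epsilon>/2) \<noteq> {}} - {Z\<in>\<F>. diameter Z \<ge> \<epsilon>/2} \<subseteq> {Z\<in>\<F>. Z \<subseteq> ball p \<epsilon>}"
    using inside not_le by blast
  moreover have "infinite ({Z\<in>\<F>. Z \<inter> ball p (\<epsilon>/2) \<noteq> {}} - {Z\<in>\<F>. diameter Z \<ge> \<epsilon>/2})"
    using assms(4) by (intro Diff_infinite_finite assms(2,3)) simp_all
  ultimately show ?thesis
    using finite_subset by blast
qed

lemma regularizing_familyD:
  assumes "regularizing_family X Y \<F>"
  shows "countable \<F>" and "disjoint \<F>" and "\<And>Z. Z \<in> \<F> \<Longrightarrow> Z homeomorphic X"
    and "\<And>\<epsilon>. \<epsilon> > 0 \<Longrightarrow> finite {Z\<in>\<F>. diameter Z \<ge> \<epsilon>}"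
    and "\<And>Z. Z \<in> \<F> \<Longrightarrow> Y \<subseteq> closure (Y - Z)" and "Y \<subseteq> closure (\<Union>\<F>)"
  using assms unfolding regularizing_family_def by (elim conjE; assumption | blast)+

lemma regularizing_family_members_inside_ball:
  assumes "compact X" and "regularizing_family X Y \<F>" and "p \<in> Y" and "\<epsilon> > 0"
  shows "infinite {Z\<in>\<F>. Z \<subseteq> ball p \<epsilon>}"
proof (rule infinite_members_inside_ball)
  have compact: "compact Z" if "Z \<in> \<F>" for Z
    using regularizing_familyD(3)[OF assms(2) that] assms(1) homeomorphic_compactness by blast
  then show "bounded Z" if "Z \<in> \<F>" for Z
    using that compact_imp_bounded by blast
  show "infinite {Z\<in>\<F>. Z \<inter> ball p \<delta> \<noteq> {}}" if "\<delta> > 0" for \<delta>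
    using regularizing_familyD[OF assms(2)] compact assms(3) that
    by (intro infinite_members_meeting_ball compact_imp_closed)
qed (use regularizing_familyD(4)[OF assms(2)] assms(4) in auto)

lemma LIMSEQ_points_of_shrinking_sets:
  fixes p :: "'a::metric_space"
  assumes "\<And>n. ps n \<in> Zs n" and "\<And>n. Zs n \<subseteq> ball p (inverse (real (Suc n)))"
  shows "ps \<longlonglongrightarrow> p"
proof (rule metric_tendsto_imp_tendsto[OF LIMSEQ_inverse_real_of_nat always_eventually], rule allI)
  fix n
  have "ps n \<in> ball p (inverse (real (Suc n)))"
    using assms by blast
  then show "dist (ps n) p \<le> dist (inverse (real (Suc n))) 0"
    by (simp add: dist_commute)
qed

theorem fact2:
  fixes X :: "'a::metric_space set" and Y :: "'b::metric_space set" and \<F> :: "'b set set"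
  assumes "compact X" and "X \<noteq> {}" and "compact Y"
    and "regularizing_family X Y \<F>"
    and "p \<in> Y"
  shows "\<exists>Zs :: nat \<Rightarrow> 'b set. inj Zs \<and> (\<forall>n. Zs n \<in> \<F>) \<and>
           (\<forall>ps. (\<forall>n. ps n \<in> Zs n) \<longrightarrow> ps \<longlonglongrightarrow> p)"
proof -
  define A where "A n = {Z\<in>\<F>. Z \<subseteq> ball p (inverse (real (Suc n)))}" for n
  have "countable \<F>"
    using assms(4) by (rule regularizing_familyD)
  moreover have "infinite (A n)" for n
    unfolding A_def by (rule regularizing_family_members_inside_ball[OF assms(1,4,5)]) simp
  ultimately obtain Zs where "inj Zs" "\<And>n. Zs n \<in> A n"
    using injective_choice_countable[of \<F> A] unfolding A_def by blast
  then show ?thesis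
    unfolding A_def using LIMSEQ_points_of_shrinking_sets by blast
qed

end
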